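(* Let $p,q,r$ be pairwise distinct primes with $p<q$ and $p<r$, and let $n$ be an integer with $0\le n<pqr$. For a finite sequence $(t_1,\dots,t_l)$ and $d\in\{0,1,2\}$ let $N_d(t_1,\dots,t_l)$ be the number of indices $i$ with $t_i=d$. Then $$a_{pqr}(n)=\sum_{k=n-p+1}^{n}\big(N_0(F_k,F_{k-q-r})-N_0(F_{k-q},F_{k-r})\big)=\sum_{k=n-p+1}^{n}\big(N_2(F_k,F_{k-q-r})-N_2(F_{k-q},F_{k-r})\big)$$ $$=\frac12\sum_{k=n-p+1}^{n}\big(N_1(F_{k-q},F_{k-r})-N_1(F_k,F_{k-q-r})\big).$$
   Context: $\Phi_{pqr}(x)=\prod_{0<k<pqr,\ \gcd(k,pqr)=1}(x-\zeta^k)$, $\zeta$ a primitive $pqr$-th root of unity, with coefficients $a_{pqr}(n)$ (zero outside $[0,\deg\Phi_{pqr}]$). For each integer $k$, let $a_k,b_k,c_k$ be the unique integers with $0\le a_k<p$, $0\le b_k<q$, $0\le c_k<r$ and $k\equiv a_kqr+b_krp+c_kpq \pmod{pqr}$, and define $F_k=\frac{a_k}{p}+\frac{b_k}{q}+\frac{c_k}{r}-\frac{k}{pqr}$. *)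

theory Defs
  imports Complex_Main "HOL-Computational_Algebra.Polynomial" "HOL-Number_Theory.Cong"
begin

definition cyclo :: "nat \<Rightarrow> complex poly" where
  "cyclo m = (\<Prod>k\<in>{k. 0 < k \<and> k < m \<and> coprime k m}. [:- ((cis (2 * pi / real m)) ^ k), 1:])"

definition abc :: "nat \<Rightarrow> nat \<Rightarrow> nat \<Rightarrow> int \<Rightarrow> int \<times> int \<times> int" where
  "abc p q r k = (THE (a, b, c). 0 \<le> a \<and> a < int p \<and> 0 \<le> b \<and> b < int q \<and> 0 \<le> c \<and> c < int r \<and>
      [k = a * int q * int r + b * int r * int p + c * int p * int q] (mod int (p * q * r)))"

definition Ffun :: "nat \<Rightarrow> nat \<Rightarrow> nat \<Rightarrow> int \<Rightarrow> real" where
  "Ffun p q r k = (case abc p q r k of (a, b, c) \<Rightarrow>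
      real_of_int a / real p + real_of_int b / real q + real_of_int c / real r
      - real_of_int k / real (p * q * r))"

definition Ncount :: "nat \<Rightarrow> real list \<Rightarrow> nat" where
  "Ncount d ts = length (filter (\<lambda>t. t = real d) ts)"

end

theory Submission
  imports Defs "HOL-Computational_Algebra.Fundamental_Theorem_Algebra"
    "HOL-Computational_Algebra.Polynomial_FPS"
begin

(* Every integer k is uniquely  k = a qr + b rp + c pq - F(k) pqr  with digits
   0 <= a < p, 0 <= b < q, 0 <= c < r and F(k) an integer; F(k) lies in {0,1,2} for
   -(qr + rp + pq) < k < pqr, F(k) = 0 exactly when k is a natural combination of qr, rp, pq,
   and complementing the digits gives F(pqr - qr - rp - pq - k) = 2 - F(k).

   Then, for
   distinct primes p, q, r: the digit representation and the properties of F above; the identity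
     Phi_pqr (x-1)(x^pq-1)(x^qr-1)(x^rp-1) = (x^pqr-1)(x^p-1)(x^q-1)(x^r-1),
   which makes Phi_pqr palindromic and yields the power series expansion
     Phi_pqr = (1 - x^pqr)(1 + ... + x^(p-1))(1 - x^q)(1 - x^r) / ((1-x^qr)(1-x^rp)(1-x^pq)),
   whose last factor has coefficient [F(n) = 0] at x^n for n < pqr.  Reading off coefficients
   gives the N_0 formula; palindromy and the symmetry of F turn it into the N_2 formula; and as
   F takes exactly one of the values 0, 1, 2 on the relevant range, the three window sums add up
   to zero, which gives the N_1 formula. *)


definition xpow_minus_one :: "nat \<Rightarrow> complex poly" where
  "xpow_minus_one d = monom 1 d - 1"

lemma poly_xpow_minus_one: "poly (xpow_minus_one d) z = z ^ d - 1"
  by (simp add: xpow_minus_one_def poly_monom)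

lemma degree_xpow_minus_one: "d > 0 \<Longrightarrow> degree (xpow_minus_one d) = d"
  unfolding xpow_minus_one_def
  by (subst diff_conv_add_uminus, subst degree_add_eq_left) (auto simp: degree_monom_eq)

lemma lead_coeff_xpow_minus_one: "d > 0 \<Longrightarrow> lead_coeff (xpow_minus_one d) = 1"
  by (simp only: degree_xpow_minus_one) (simp add: xpow_minus_one_def)

lemma xpow_minus_one_nonzero: "d > 0 \<Longrightarrow> xpow_minus_one d \<noteq> 0"
  by (metis lead_coeff_xpow_minus_one leading_coeff_0_iff zero_neq_one)

lemma reflect_xpow_minus_one:
  assumes "d > 0"
  shows "reflect_poly (xpow_minus_one d) = - xpow_minus_one d"
proof (rule poly_eqI)
  fix j
  have "coeff (xpow_minus_one d) i = (if i = d then 1 else 0) - (if i = 0 then 1 else 0)" for i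
    by (simp add: xpow_minus_one_def coeff_monom)
  thus "coeff (reflect_poly (xpow_minus_one d)) j = coeff (- xpow_minus_one d) j"
    using assms by (auto simp: coeff_reflect_poly degree_xpow_minus_one)
qed

lemma fps_of_xpow_minus_one: "fps_of_poly (xpow_minus_one d) = fps_X ^ d - 1"
  by (simp add: xpow_minus_one_def fps_of_poly_diff fps_of_poly_monom')

text \<open>\<open>x^d - 1\<close> is the product of \<open>x - \<zeta>\<close> over all d-th roots of unity: it is squarefree
  (its derivative \<open>d x^(d-1)\<close> has no common root with it) and monic.\<close>

lemma prod_roots_of_unity:
  assumes "d > 0"
  shows "(\<Prod>j<d. [:- cis (2 * pi * real j / real d), 1:]) = xpow_minus_one d"
proof -
  have "rsquarefree (xpow_minus_one d)"
    unfolding rsquarefree_roots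
  proof (intro allI notI)
    fix a assume root: "poly (xpow_minus_one d) a = 0 \<and> poly (pderiv (xpow_minus_one d)) a = 0"
    hence "a \<noteq> 0" using assms by (auto simp: poly_xpow_minus_one power_0_left)
    have "poly (pderiv (xpow_minus_one d)) a = of_nat d * a ^ (d - 1)"
      by (simp add: xpow_minus_one_def pderiv_diff pderiv_monom poly_monom)
    thus False using root \<open>a \<noteq> 0\<close> assms by simp
  qed
  hence "xpow_minus_one d
      = smult (lead_coeff (xpow_minus_one d)) (\<Prod>z | poly (xpow_minus_one d) z = 0. [:-z, 1:])"
    by (rule complex_poly_decompose_rsquarefree[symmetric])
  also have "\<dots> = (\<Prod>z\<in>{z. z ^ d = 1}. [:-z, 1:])"
    using assms by (simp add: lead_coeff_xpow_minus_one poly_xpow_minus_one)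
  also have "\<dots> = (\<Prod>j<d. [:- cis (2 * pi * real j / real d), 1:])"
    by (rule prod.reindex_bij_betw[symmetric, OF bij_betw_roots_unity[OF assms]])
  finally show ?thesis by simp
qed

lemma prod_roots_multiples:
  assumes "e > 0" "e dvd m" "m > 0"
  shows "(\<Prod>k\<in>{k. k < m \<and> e dvd k}. [:- (cis (2 * pi / real m) ^ k), 1:])
       = xpow_minus_one (m div e)"
proof -
  define d where "d = m div e"
  have m: "m = e * d" using assms by (simp add: d_def)
  have "d > 0" using assms m by simp
  have "{k. k < m \<and> e dvd k} = (\<lambda>j. e * j) ` {..<d}"
  proof (intro set_eqI iffI)
    fix k assume "k \<in> {k. k < m \<and> e dvd k}"
    then obtain j where "k = e * j" "e * j < e * d" using m by auto
    thus "k \<in> (\<lambda>j. e * j) ` {..<d}" by auto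
  qed (use assms m in auto)
  moreover have "inj_on (\<lambda>j. e * j) {..<d}" using assms by (auto simp: inj_on_def)
  ultimately have "(\<Prod>k\<in>{k. k < m \<and> e dvd k}. [:- (cis (2 * pi / real m) ^ k), 1:])
      = (\<Prod>j<d. [:- (cis (2 * pi / real m) ^ (e * j)), 1:])"
    by (simp add: prod.reindex)
  also have "\<dots> = (\<Prod>j<d. [:- cis (2 * pi * real j / real d), 1:])"
  proof (rule prod.cong[OF refl])
    fix j
    have "real (e * j) * (2 * pi / real m) = 2 * pi * real j / real d"
      using assms \<open>d > 0\<close> by (simp add: m field_simps)
    thus "[:- (cis (2 * pi / real m) ^ (e * j)), 1:] = [:- cis (2 * pi * real j / real d), 1:]"
      by (simp add: DeMoivre)
  qed
  also have "\<dots> = xpow_minus_one d" by (rule prod_roots_of_unity[OF \<open>d > 0\<close>])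
  finally show ?thesis by (simp add: d_def)
qed

text \<open>A product over a filtered range as a product over the whole range with 0/1 exponents;
  this lets several such products be multiplied termwise.\<close>

lemma prod_filter_as_power:
  fixes f :: "nat \<Rightarrow> 'a::comm_monoid_mult"
  shows "(\<Prod>k\<in>{k. k < m \<and> P k}. f k) = (\<Prod>k<m. f k ^ (if P k then 1 else 0))"
proof -
  have "{k. k < m \<and> P k} = {k \<in> {..<m}. P k}" by auto
  hence "(\<Prod>k\<in>{k. k < m \<and> P k}. f k) = (\<Prod>k<m. if P k then f k else 1)"
    by (metis (no_types) finite_lessThan prod.inter_filter)
  also have "\<dots> = (\<Prod>k<m. f k ^ (if P k then 1 else 0))" by (intro prod.cong) auto
  finally show ?thesis .
qed

definition multiples_fps :: "nat \<Rightarrow> complex fps" where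
  "multiples_fps a = Abs_fps (\<lambda>n. if a dvd n then 1 else 0)"

lemma multiples_fps_inverse:
  assumes "a > 0"
  shows "(1 - fps_X ^ a) * multiples_fps a = 1"
proof (rule fps_ext)
  fix n
  have "fps_nth ((1 - fps_X ^ a) * multiples_fps a) n
      = fps_nth (multiples_fps a) n - fps_nth (fps_X ^ a * multiples_fps a) n"
    by (simp add: algebra_simps)
  also have "\<dots> = fps_nth 1 n"
  proof (cases "n < a")
    case True
    thus ?thesis using assms by (auto simp: multiples_fps_def fps_X_power_mult_nth dest: dvd_imp_le)
  next
    case False
    hence "a dvd n \<longleftrightarrow> a dvd (n - a)" by (simp add: dvd_minus_self)
    thus ?thesis using False assms by (auto simp: multiples_fps_def fps_X_power_mult_nth)
  qed
  finally show "fps_nth ((1 - fps_X ^ a) * multiples_fps a) n = fps_nth 1 n" .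
qed

text \<open>Coefficients of a power series indexed by integers, zero at negative indices; this makes
  the shifts \<open>k - q\<close>, \<open>k - r\<close> in the formulas meaningful without side conditions.\<close>

definition coeff_int :: "complex fps \<Rightarrow> int \<Rightarrow> complex" where
  "coeff_int f k = (if k < 0 then 0 else fps_nth f (nat k))"

lemma coeff_int_one_minus_X_power:
  "coeff_int ((1 - fps_X ^ a) * f) n = coeff_int f n - coeff_int f (n - int a)"
proof -
  have "fps_nth ((1 - fps_X ^ a) * f) k = fps_nth f k - fps_nth (fps_X ^ a * f) k" for k
    by (simp add: algebra_simps)
  thus ?thesis by (auto simp: coeff_int_def fps_X_power_mult_nth nat_diff_distrib)
qed

lemma coeff_int_geometric_sum:
  "coeff_int ((\<Sum>i<p. fps_X ^ i) * f) n = (\<Sum>k\<in>{n - int p + 1..n}. coeff_int f k)"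
proof -
  have "coeff_int ((\<Sum>i<p. fps_X ^ i) * f) n = (\<Sum>i<p. coeff_int f (n - int i))"
    by (auto simp: coeff_int_def sum_distrib_right fps_sum_nth fps_X_power_mult_nth
        nat_diff_distrib intro!: sum.cong)
  also have "\<dots> = (\<Sum>k\<in>{n - int p + 1..n}. coeff_int f k)"
    by (rule sum.reindex_bij_witness[of _ "\<lambda>k. nat (n - k)" "\<lambda>i. n - int i"]) auto
  finally show ?thesis .
qed

lemma sum_reflect_int_interval:
  fixes f :: "int \<Rightarrow> 'a::comm_monoid_add"
  shows "(\<Sum>k\<in>{a..b}. f (c - k)) = (\<Sum>j\<in>{c - b..c - a}. f j)"
proof -
  have "inj_on ((-) c) {a..b}" by (auto simp: inj_on_def)
  hence "sum f ((-) c ` {a..b}) = sum (f \<circ> (-) c) {a..b}" by (rule sum.reindex)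
  thus ?thesis by (simp add: o_def)
qed

lemma coeff_int_palindromic:
  assumes "reflect_poly P = P"
  shows "coeff_int (fps_of_poly P) n = coeff_int (fps_of_poly P) (int (degree P) - n)"
proof -
  have sym: "coeff P j = (if j > degree P then 0 else coeff P (degree P - j))" for j
    using coeff_reflect_poly[of P j] assms by simp
  consider "n < 0" | "0 \<le> n" "nat n > degree P" | "0 \<le> n" "nat n \<le> degree P" by linarith
  thus ?thesis
  proof cases
    case 1
    thus ?thesis using sym[of "nat (int (degree P) - n)"] by (simp add: coeff_int_def)
  next
    case 2
    thus ?thesis using sym[of "nat n"] by (simp add: coeff_int_def)
  next
    case 3
    hence "nat (int (degree P) - n) = degree P - nat n" by linarith
    thus ?thesis using 3 sym[of "nat n"] by (simp add: coeff_int_def)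
  qed
qed

text \<open>Flipping the sign of four factors; this passes from the \<open>x^d - 1\<close> form of the cyclotomic
  identity to the \<open>1 - x^d\<close> form, whose factors are invertible power series.\<close>

lemma four_factors_sign_flip:
  fixes a b c d :: "'a::comm_ring_1"
  shows "(a - 1) * (b - 1) * (c - 1) * (d - 1) = (1 - a) * (1 - b) * (1 - c) * (1 - d)"
  by (simp add: algebra_simps)

text \<open>Uniqueness of a digit: modulo \<open>a\<close> only the term \<open>x b c\<close> survives, and \<open>a\<close> is coprime
  to \<open>b c\<close>; two digits in \<open>[0, a)\<close> that agree modulo \<open>a\<close> are equal.\<close>

lemma digit_unique:
  fixes a b c :: nat and x x' y y' z z' :: int
  assumes "coprime a (b * c)" "0 \<le> x" "x < int a" "0 \<le> x'" "x' < int a"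
    and "int a dvd (x * b * c + y * c * a + z * a * b) - (x' * b * c + y' * c * a + z' * a * b)"
  shows "x = x'"
proof (rule ccontr)
  assume "x \<noteq> x'"
  have "(x * b * c + y * c * a + z * a * b) - (x' * b * c + y' * c * a + z' * a * b)
      = (x - x') * (int b * int c) + ((y - y') * int c + (z - z') * int b) * int a"
    by (simp add: algebra_simps)
  with assms(6) have "int a dvd (x - x') * (int b * int c)"
    by (metis dvd_add_left_iff dvd_triv_right)
  moreover have "coprime (int a) (int b * int c)"
    using assms(1) by (simp only: of_nat_mult[symmetric] coprime_int_iff)
  ultimately have "int a dvd x - x'" by (rule coprime_dvd_mult_left_iff[THEN iffD1, rotated])
  hence "\<bar>int a\<bar> \<le> \<bar>x - x'\<bar>" using \<open>x \<noteq> x'\<close> by (intro dvd_imp_le_int) simp_all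
  thus False using assms(2-5) by linarith
qed

text \<open>Throughout, \<open>p, q, r\<close> are distinct primes.\<close>

locale three_primes =
  fixes p q r :: nat
  assumes prime_p: "prime p" and prime_q: "prime q" and prime_r: "prime r"
    and distinct: "p \<noteq> q" "q \<noteq> r" "p \<noteq> r"
begin

lemma ge_two: "p \<ge> 2" "q \<ge> 2" "r \<ge> 2"
  using prime_p prime_q prime_r by (auto simp: prime_ge_2_nat)

lemma coprime_factors: "coprime p (q * r)" "coprime q (r * p)" "coprime r (p * q)"
  using prime_p prime_q prime_r distinct by (auto simp: primes_coprime)

definition digit_value :: "int \<times> int \<times> int \<Rightarrow> int" where
  "digit_value t = (case t of (a, b, c) \<Rightarrow> a * int q * int r + b * int r * int p + c * int p * int q)"

definition digits :: "(int \<times> int \<times> int) set" where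
  "digits = {0..<int p} \<times> {0..<int q} \<times> {0..<int r}"

text \<open>Uniqueness: congruent digit values have equal digits, one prime at a time.\<close>

lemma digit_value_unique:
  assumes "t \<in> digits" "t' \<in> digits" "[digit_value t = digit_value t'] (mod int (p * q * r))"
  shows "t = t'"
proof -
  obtain x y z x' y' z' where t: "t = (x, y, z)" "t' = (x', y', z')" by (cases t, cases t') auto
  have d: "int (p * q * r) dvd (x*q*r + y*r*p + z*p*q) - (x'*q*r + y'*r*p + z'*p*q)"
    using assms(3) by (simp add: t digit_value_def cong_iff_dvd_diff)
  have box: "0 \<le> x" "x < int p" "0 \<le> x'" "x' < int p" "0 \<le> y" "y < int q" "0 \<le> y'" "y' < int q"
     "0 \<le> z" "z < int r" "0 \<le> z'" "z' < int r"
    using assms(1,2) by (auto simp: t digits_def)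
  have "int e dvd (x*q*r + y*r*p + z*p*q) - (x'*q*r + y'*r*p + z'*p*q)" if "e dvd p * q * r" for e
    using dvd_trans[OF _ d] that by (simp only: of_nat_dvd_iff)
  hence dp: "int p dvd (x*q*r + y*r*p + z*p*q) - (x'*q*r + y'*r*p + z'*p*q)"
    and dq: "int q dvd (y*r*p + z*p*q + x*q*r) - (y'*r*p + z'*p*q + x'*q*r)"
    and dr: "int r dvd (z*p*q + x*q*r + y*r*p) - (z'*p*q + x'*q*r + y'*r*p)"
    by (simp_all add: ac_simps)
  have "x = x'" by (rule digit_unique[OF coprime_factors(1) box(1-4) dp])
  moreover have "y = y'" by (rule digit_unique[OF coprime_factors(2) box(5-8) dq])
  moreover have "z = z'" by (rule digit_unique[OF coprime_factors(3) box(9-12) dr])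
  ultimately show ?thesis by (simp add: t)
qed

text \<open>Existence: \<open>digit_value\<close> is injective modulo \<open>pqr\<close> on a box of \<open>pqr\<close> points, hence surjective
  onto the residues.\<close>

lemma digit_value_exists: "\<exists>t\<in>digits. [k = digit_value t] (mod int (p * q * r))"
proof -
  define M where "M = int (p * q * r)"
  have "M > 0" using ge_two by (simp add: M_def)
  define f where "f t = digit_value t mod M" for t
  have "inj_on f digits"
    by (rule inj_onI) (use digit_value_unique in \<open>auto simp: f_def cong_def M_def\<close>)
  hence "card (f ` digits) = card {0..<M}"
    by (simp add: card_image digits_def card_cartesian_product M_def nat_mult_distrib)
  moreover have "f ` digits \<subseteq> {0..<M}" using \<open>M > 0\<close> by (auto simp: f_def)
  ultimately have "f ` digits = {0..<M}" by (intro card_subset_eq) auto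
  moreover have "k mod M \<in> {0..<M}" using \<open>M > 0\<close> by simp
  ultimately obtain t where "t \<in> digits" "f t = k mod M" by (metis imageE)
  thus ?thesis by (metis f_def cong_def M_def)
qed

lemma abc_eqI:
  assumes "t \<in> digits" "[k = digit_value t] (mod int (p * q * r))"
  shows "abc p q r k = t"
  unfolding abc_def
proof (rule the_equality)
  show "case t of (a, b, c) \<Rightarrow> 0 \<le> a \<and> a < int p \<and> 0 \<le> b \<and> b < int q \<and> 0 \<le> c \<and> c < int r \<and>
      [k = a * int q * int r + b * int r * int p + c * int p * int q] (mod int (p * q * r))"
    using assms by (auto simp: digits_def digit_value_def split: prod.split)
next
  fix t' assume "case t' of (a, b, c) \<Rightarrow> 0 \<le> a \<and> a < int p \<and> 0 \<le> b \<and> b < int q \<and> 0 \<le> c \<and>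
      c < int r \<and> [k = a * int q * int r + b * int r * int p + c * int p * int q] (mod int (p * q * r))"
  hence t': "t' \<in> digits" "[k = digit_value t'] (mod int (p * q * r))"
    by (auto simp: digits_def digit_value_def split: prod.splits)
  have "[digit_value t' = digit_value t] (mod int (p * q * r))"
    using cong_trans[OF cong_sym[OF t'(2)] assms(2)] .
  thus "t' = t" using digit_value_unique[OF t'(1) assms(1)] by blast
qed

lemma abc_digits: "abc p q r k \<in> digits"
  and abc_cong: "[k = digit_value (abc p q r k)] (mod int (p * q * r))"
proof -
  obtain t where t: "t \<in> digits" "[k = digit_value t] (mod int (p * q * r))" using digit_value_exists by blast
  with abc_eqI have "abc p q r k = t" by blast
  thus "abc p q r k \<in> digits" "[k = digit_value (abc p q r k)] (mod int (p * q * r))" using t by simp_all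
qed

definition Fint :: "int \<Rightarrow> int" where
  "Fint k = (digit_value (abc p q r k) - k) div int (p * q * r)"

lemma digit_value_abc: "digit_value (abc p q r k) = k + int (p * q * r) * Fint k"
proof -
  have "int (p * q * r) dvd digit_value (abc p q r k) - k"
    using abc_cong[of k] by (metis cong_iff_dvd_diff cong_sym)
  thus ?thesis by (simp add: Fint_def)
qed

lemma Ffun_eq_Fint: "Ffun p q r k = real_of_int (Fint k)"
proof -
  obtain a b c where t: "abc p q r k = (a, b, c)" by (cases "abc p q r k") auto
  have num: "real_of_int a * q * r + real_of_int b * r * p + real_of_int c * p * q - real_of_int k
      = real p * real q * real r * real_of_int (Fint k)"
    using arg_cong[OF digit_value_abc[of k], of real_of_int] by (simp add: digit_value_def t algebra_simps)
  have "Ffun p q r k = (real_of_int a * q * r + real_of_int b * r * p + real_of_int c * p * q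
      - real_of_int k) / (real p * real q * real r)"
    using ge_two by (simp add: Ffun_def t field_simps)
  thus ?thesis using ge_two by (simp add: num)
qed

definition sigma :: int where "sigma = int q * int r + int r * int p + int p * int q"

lemma digit_value_bounds:
  assumes "t \<in> digits"
  shows "0 \<le> digit_value t" "digit_value t \<le> 3 * int (p * q * r) - sigma"
proof -
  obtain a b c where t: "t = (a, b, c)" by (cases t) auto
  have box: "0 \<le> a" "a \<le> int p - 1" "0 \<le> b" "b \<le> int q - 1" "0 \<le> c" "c \<le> int r - 1"
    using assms by (auto simp: t digits_def)
  show "0 \<le> digit_value t" using box by (simp add: digit_value_def t)
  have "a * int q * int r \<le> (int p - 1) * int q * int r"
    "b * int r * int p \<le> (int q - 1) * int r * int p"
    "c * int p * int q \<le> (int r - 1) * int p * int q"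
    using box by (simp_all add: mult_right_mono)
  thus "digit_value t \<le> 3 * int (p * q * r) - sigma" by (simp add: digit_value_def t sigma_def algebra_simps)
qed

lemma Fint_range:
  assumes "- sigma < k" "k < int (p * q * r)"
  shows "Fint k \<in> {0, 1, 2}"
proof -
  define M where "M = int (p * q * r)"
  have "M > 0" using ge_two by (simp add: M_def)
  have "M * Fint k = digit_value (abc p q r k) - k" using digit_value_abc M_def by simp
  moreover note digit_value_bounds[OF abc_digits[of k]]
  ultimately have "M * (-1) < M * Fint k" "M * Fint k < M * 3" using assms M_def by auto
  hence "-1 < Fint k" "Fint k < 3" using \<open>M > 0\<close> mult_less_cancel_left_pos by blast+
  thus ?thesis by auto
qed

lemma Fint_neg: "k < 0 \<Longrightarrow> Fint k \<noteq> 0"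
  using digit_value_abc[of k] digit_value_bounds(1)[OF abc_digits[of k]] by auto

text \<open>The symmetry \<open>F(pqr - sigma - k) = 2 - F(k)\<close>: complementing all three digits
  \<open>(a, b, c) \<mapsto> (p-1-a, q-1-b, r-1-c)\<close> represents \<open>pqr - sigma - k\<close>.\<close>

lemma Fint_reflect: "Fint (int (p * q * r) - sigma - k) = 2 - Fint k"
proof -
  define M where "M = int (p * q * r)"
  obtain a b c where t: "abc p q r k = (a, b, c)" by (cases "abc p q r k") auto
  define t' where "t' = (int p - 1 - a, int q - 1 - b, int r - 1 - c)"
  have "t' \<in> digits" using abc_digits[of k] by (auto simp: t digits_def t'_def)
  have "digit_value t' = 3 * M - sigma - digit_value (abc p q r k)"
    by (simp add: digit_value_def t'_def t M_def sigma_def algebra_simps)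
  hence diff: "digit_value t' - (M - sigma - k) = M * (2 - Fint k)"
    using digit_value_abc[of k] by (simp add: M_def algebra_simps)
  hence "[M - sigma - k = digit_value t'] (mod M)"
    by (metis cong_iff_dvd_diff cong_sym dvd_triv_left)
  hence "abc p q r (M - sigma - k) = t'" using abc_eqI \<open>t' \<in> digits\<close> M_def by blast
  hence "M * Fint (M - sigma - k) = M * (2 - Fint k)"
    using digit_value_abc[of "M - sigma - k"] diff by (simp add: M_def)
  thus ?thesis using ge_two by (simp add: M_def)
qed

lemma natural_combination_digits:
  fixes x y z :: nat
  assumes "n = x * (q * r) + y * (r * p) + z * (p * q)" "n < p * q * r"
  shows "abc p q r (int n) = (int x, int y, int z)" and "Fint (int n) = 0"
proof -
  have "x * (q * r) \<le> n" "y * (r * p) \<le> n" "z * (p * q) \<le> n" using assms(1) by simp_all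
  moreover have "n < p * (q * r)" "n < q * (r * p)" "n < r * (p * q)"
    using assms(2) by (simp_all add: ac_simps)
  ultimately have "x * (q * r) < p * (q * r)" "y * (r * p) < q * (r * p)" "z * (p * q) < r * (p * q)"
    by linarith+
  hence "x < p" "y < q" "z < r" by simp_all
  hence "(int x, int y, int z) \<in> digits" "int n = digit_value (int x, int y, int z)"
    using assms(1) by (simp_all add: digits_def digit_value_def algebra_simps)
  thus abc: "abc p q r (int n) = (int x, int y, int z)" by (simp add: abc_eqI)
  have "int (p * q * r) * Fint (int n) = 0"
    using digit_value_abc[of "int n"] by (simp add: abc \<open>int n = _\<close>[symmetric])
  thus "Fint (int n) = 0" using ge_two by simp
qed

lemma Fint_zero_combination:
  assumes "Fint (int n) = 0" "abc p q r (int n) = (a, b, c)"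
  shows "n = nat a * (q * r) + nat b * (r * p) + nat c * (p * q)"
proof -
  have "0 \<le> a" "0 \<le> b" "0 \<le> c" using abc_digits[of "int n"] assms(2) by (auto simp: digits_def)
  moreover have "int n = a * int q * int r + b * int r * int p + c * int p * int q"
    using digit_value_abc[of "int n"] assms by (simp add: digit_value_def)
  ultimately have "int n = int (nat a * (q * r) + nat b * (r * p) + nat c * (p * q))"
    by (simp add: algebra_simps)
  thus ?thesis by linarith
qed

text \<open>The multiplicity pattern behind the cyclotomic identity: for \<open>0 \<le> k < pqr\<close>, the factor
  \<open>x - \<zeta>^k\<close> occurs equally often on both sides of
  \<open>\<Phi> (x-1)(x^pq-1)(x^qr-1)(x^rp-1) = (x^pqr-1)(x^p-1)(x^q-1)(x^r-1)\<close>
  (inclusion-exclusion over the prime divisors of \<open>k\<close>).\<close>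

lemma factor_multiplicities:
  assumes "k < p * q * r"
  shows "(if 0 < k \<and> coprime k (p * q * r) then 1 else 0) + (if p * q * r dvd k then 1 else 0)
       + (if r dvd k then 1 else 0) + (if p dvd k then 1 else 0) + (if q dvd k then 1 else 0)
     = (if 1 dvd k then 1 else 0) + (if q * r dvd k then 1 else 0) + (if r * p dvd k then 1 else 0)
       + (if p * q dvd k then (1::nat) else 0)"
proof (cases "k = 0")
  case True
  thus ?thesis using ge_two by simp
next
  case False
  have pair: "a * b dvd k \<longleftrightarrow> a dvd k \<and> b dvd k" if "prime a" "prime b" "a \<noteq> b" for a b
    using that by (meson divides_mult dvd_mult_left dvd_mult_right primes_coprime)
  have "\<not> p * q * r dvd k" using False assms by (auto dest: dvd_imp_le)
  moreover have "p * q * r dvd k" if "p dvd k" "q dvd k" "r dvd k"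
    using that coprime_factors(3) pair[OF prime_p prime_q distinct(1)]
    by (metis coprime_commute divides_mult mult.commute)
  moreover have "coprime k a \<longleftrightarrow> \<not> a dvd k" if "prime a" for a
    using that by (meson coprime_commute not_coprimeI dvd_refl prime_imp_coprime not_prime_unit)
  ultimately show ?thesis
    using False prime_p prime_q prime_r distinct
    by (auto simp: pair)
qed

definition root_factor :: "nat \<Rightarrow> complex poly" where
  "root_factor k = [:- (cis (2 * pi / real (p * q * r)) ^ k), 1:]"

lemma xpow_minus_one_as_product:
  assumes "e dvd p * q * r"
  shows "xpow_minus_one (p * q * r div e) = (\<Prod>k<p * q * r. root_factor k ^ (if e dvd k then 1 else 0))"
proof -
  have "e > 0" using assms ge_two by (auto intro!: Nat.gr0I)
  hence "xpow_minus_one (p * q * r div e) = (\<Prod>k\<in>{k. k < p * q * r \<and> e dvd k}. root_factor k)"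
    using prod_roots_multiples[of e "p * q * r"] assms ge_two by (simp add: root_factor_def)
  thus ?thesis by (simp only: prod_filter_as_power)
qed

lemma cyclo_as_product:
  "cyclo (p * q * r) = (\<Prod>k<p * q * r. root_factor k ^ (if 0 < k \<and> coprime k (p * q * r) then 1 else 0))"
proof -
  have "{k. 0 < k \<and> k < p * q * r \<and> coprime k (p * q * r)}
      = {k. k < p * q * r \<and> (0 < k \<and> coprime k (p * q * r))}" by auto
  thus ?thesis unfolding cyclo_def root_factor_def using prod_filter_as_power by simp
qed

text \<open>The cyclotomic identity: multiply the product representations termwise and compare exponents
  with the multiplicity pattern.\<close>

lemma cyclo_identity:
  "cyclo (p * q * r) * (xpow_minus_one 1 * xpow_minus_one (p * q) * xpow_minus_one (q * r)
      * xpow_minus_one (r * p))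
   = xpow_minus_one (p * q * r) * xpow_minus_one p * xpow_minus_one q * xpow_minus_one r"
proof -
  define m where "m = p * q * r"
  define Z where "Z e = (\<Prod>k<m. root_factor k ^ (if e dvd k then 1 else (0::nat)))" for e
  have quotients: "m div m = 1" "m div r = p * q" "m div p = q * r" "m div q = r * p"
    "m div 1 = m" "m div (q * r) = p" "m div (r * p) = q" "m div (p * q) = r"
    using ge_two by (simp_all add: m_def)
  have divisors: "m dvd m" "r dvd m" "p dvd m" "q dvd m" "q * r dvd m" "r * p dvd m" "p * q dvd m"
    by (simp_all add: m_def)
  have Z: "xpow_minus_one (m div e) = Z e" if "e dvd m" for e
    using xpow_minus_one_as_product that by (simp add: m_def Z_def)
  have "cyclo m * (xpow_minus_one 1 * xpow_minus_one (p * q) * xpow_minus_one (q * r)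
      * xpow_minus_one (r * p))
      = (\<Prod>k<m. root_factor k ^ ((if 0 < k \<and> coprime k m then 1 else 0) + (if m dvd k then 1 else 0)
        + (if r dvd k then 1 else 0) + (if p dvd k then 1 else 0) + (if q dvd k then 1 else 0)))"
    using Z[OF divisors(1)] Z[OF divisors(2)] Z[OF divisors(3)] Z[OF divisors(4)]
    unfolding quotients cyclo_as_product[folded m_def]
    by (simp add: Z_def prod.distrib[symmetric] power_add mult.assoc)
  also have "\<dots> = (\<Prod>k<m. root_factor k ^ ((if 1 dvd k then 1 else 0) + (if q * r dvd k then 1 else 0)
        + (if r * p dvd k then 1 else 0) + (if p * q dvd k then 1 else 0)))"
    by (intro prod.cong refl arg_cong[where f = "\<lambda>e. root_factor _ ^ e"])
      (use factor_multiplicities in \<open>simp add: m_def\<close>)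
  also have "\<dots> = xpow_minus_one m * xpow_minus_one p * xpow_minus_one q * xpow_minus_one r"
    using Z[OF dvd_1_left] Z[OF divisors(5)] Z[OF divisors(6)] Z[OF divisors(7)]
    unfolding quotients
    by (simp add: Z_def prod.distrib[symmetric] power_add mult_ac)
  finally show ?thesis by (simp add: m_def)
qed

lemma sigma_ge: "int p + int q + int r \<le> sigma"
proof -
  have "int r \<le> int q * int r" "int p \<le> int r * int p" "int q \<le> int p * int q"
    using ge_two by simp_all
  thus ?thesis by (simp add: sigma_def)
qed

text \<open>Consequently \<open>\<Phi>_pqr\<close> is palindromic of degree \<open>phi = (p-1)(q-1)(r-1)\<close>: all the factors
  \<open>x^d - 1\<close> are anti-palindromic.\<close>

definition phi :: nat where "phi = p * q * r + p + q + r - (1 + p * q + q * r + r * p)"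

lemma cyclo_reflect: "reflect_poly (cyclo (p * q * r)) = cyclo (p * q * r)"
  and degree_cyclo: "degree (cyclo (p * q * r)) = phi"
proof -
  define C where "C = cyclo (p * q * r)"
  define L where "L = xpow_minus_one 1 * xpow_minus_one (p * q) * xpow_minus_one (q * r)
    * xpow_minus_one (r * p)"
  have id: "C * L = xpow_minus_one (p * q * r) * xpow_minus_one p * xpow_minus_one q * xpow_minus_one r"
    using cyclo_identity by (simp add: C_def L_def)
  have "L \<noteq> 0" using ge_two by (simp add: L_def xpow_minus_one_nonzero)
  moreover have "C * L \<noteq> 0" unfolding id using ge_two by (simp add: xpow_minus_one_nonzero)
  ultimately have "C \<noteq> 0" by auto
  have "reflect_poly C * L = reflect_poly (C * L)"
    using ge_two by (simp add: L_def reflect_poly_mult reflect_xpow_minus_one)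
  also have "\<dots> = C * L"
    unfolding id using ge_two by (simp add: reflect_poly_mult reflect_xpow_minus_one)
  finally show "reflect_poly (cyclo (p * q * r)) = cyclo (p * q * r)"
    using \<open>L \<noteq> 0\<close> by (simp add: C_def)
  have "degree C + (1 + p * q + q * r + r * p) = degree (C * L)"
    using \<open>C \<noteq> 0\<close> ge_two by (simp add: L_def degree_mult_eq xpow_minus_one_nonzero degree_xpow_minus_one)
  also have "\<dots> = p * q * r + p + q + r"
    unfolding id using ge_two by (simp add: degree_mult_eq xpow_minus_one_nonzero degree_xpow_minus_one)
  finally show "degree (cyclo (p * q * r)) = phi" by (simp add: phi_def C_def)
qed

lemma phi_int: "int phi = int (p * q * r) - sigma + int p + int q + int r - 1"
proof -
  have "0 \<le> (int p - 1) * (int q - 1) * (int r - 1)" using ge_two by simp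
  also have "\<dots> = int (p * q * r + p + q + r) - int (1 + p * q + q * r + r * p)"
    by (simp add: algebra_simps)
  finally have "1 + p * q + q * r + r * p \<le> p * q * r + p + q + r" by linarith
  thus ?thesis by (simp add: phi_def sigma_def of_nat_diff algebra_simps)
qed

definition combination_series :: "complex fps" where
  "combination_series = multiples_fps (q * r) * multiples_fps (r * p) * multiples_fps (p * q)"

text \<open>Dividing the cyclotomic identity by \<open>(1-x)(1-x^pq)(1-x^qr)(1-x^rp)\<close> in the power series ring,
  using \<open>1 - x^p = (1 - x)(1 + x + ... + x^(p-1))\<close>.\<close>

lemma fps_cyclo_expansion:
  "fps_of_poly (cyclo (p * q * r)) = (1 - fps_X ^ (p * q * r)) * ((\<Sum>i<p. fps_X ^ i)
     * ((1 - fps_X ^ q) * ((1 - fps_X ^ r) * combination_series)))"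
proof -
  define X :: "complex fps" where "X = fps_X"
  define f where "f = fps_of_poly (cyclo (p * q * r))"
  define U where "U = (1 - X ^ (q * r)) * (1 - X ^ (r * p)) * (1 - X ^ (p * q))"
  define V where "V = (1 - X ^ (p * q * r)) * ((\<Sum>i<p. X ^ i) * ((1 - X ^ q) * (1 - X ^ r)))"
  have "f * ((X ^ 1 - 1) * (X ^ (p * q) - 1) * (X ^ (q * r) - 1) * (X ^ (r * p) - 1))
      = (X ^ (p * q * r) - 1) * (X ^ p - 1) * (X ^ q - 1) * (X ^ r - 1)"
    using arg_cong[OF cyclo_identity, of fps_of_poly]
    by (simp only: fps_of_poly_mult fps_of_xpow_minus_one f_def X_def mult.assoc)
  hence "(1 - X) * (f * U) = (1 - X) * V"
    unfolding four_factors_sign_flip one_diff_power_eq[of X p] U_def V_def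
    by (simp only: power_one_right mult_ac)
  moreover have "1 - X \<noteq> 0"
    using arg_cong[of "1 - X" 0 "\<lambda>g. fps_nth g 0"] by (auto simp: X_def)
  ultimately have "f * U = V" by simp
  moreover have "U * combination_series = 1"
  proof -
    have "U * combination_series = ((1 - X ^ (q * r)) * multiples_fps (q * r))
        * ((1 - X ^ (r * p)) * multiples_fps (r * p)) * ((1 - X ^ (p * q)) * multiples_fps (p * q))"
      by (simp only: U_def combination_series_def mult_ac)
    thus ?thesis using ge_two by (simp add: multiples_fps_inverse X_def)
  qed
  ultimately have "f = V * combination_series" by (metis mult.assoc mult_1_right)
  thus ?thesis by (simp only: f_def V_def X_def mult.assoc)
qed

text \<open>Below \<open>pqr\<close>, the coefficient of \<open>x^n\<close> in \<open>combination_series\<close> counts the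
  representations \<open>n = x qr + y rp + z pq\<close>; there is one exactly when \<open>F(n) = 0\<close>.\<close>

lemma coeff_combination_series:
  assumes "n < p * q * r"
  shows "fps_nth combination_series n = (if Fint (int n) = 0 then 1 else 0)"
proof -
  obtain a b c where abc: "abc p q r (int n) = (a, b, c)" by (cases "abc p q r (int n)") auto
  define i0 where "i0 = nat a * (q * r)"
  define s0 where "s0 = nat a * (q * r) + nat b * (r * p)"
  have solution_iff: "(q * r dvd i \<and> r * p dvd (s - i) \<and> p * q dvd (n - s))
      \<longleftrightarrow> (Fint (int n) = 0 \<and> i = i0 \<and> s = s0)" if "i \<le> s" "s \<le> n" for i s
  proof
    assume "q * r dvd i \<and> r * p dvd (s - i) \<and> p * q dvd (n - s)"
    then obtain x y z where xyz: "i = x * (q * r)" "s - i = y * (r * p)" "n - s = z * (p * q)"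
      by (metis dvd_def mult.commute)
    hence "n = x * (q * r) + y * (r * p) + z * (p * q)" using that by linarith
    from natural_combination_digits[OF this assms]
    show "Fint (int n) = 0 \<and> i = i0 \<and> s = s0"
      using xyz that abc by (auto simp: i0_def s0_def)
  next
    assume sol: "Fint (int n) = 0 \<and> i = i0 \<and> s = s0"
    hence "n = nat a * (q * r) + nat b * (r * p) + nat c * (p * q)"
      using Fint_zero_combination abc by blast
    thus "q * r dvd i \<and> r * p dvd (s - i) \<and> p * q dvd (n - s)"
      using sol by (simp add: i0_def s0_def)
  qed
  have "fps_nth combination_series n = (\<Sum>s\<in>{0..n}. \<Sum>i\<in>{0..s}.
      if q * r dvd i \<and> r * p dvd (s - i) \<and> p * q dvd (n - s) then 1 else 0)"
    by (auto simp: combination_series_def fps_mult_nth multiples_fps_def sum_distrib_right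
        intro!: sum.cong)
  also have "\<dots> = (\<Sum>s\<in>{0..n}. \<Sum>i\<in>{0..s}. if Fint (int n) = 0 \<and> i = i0 \<and> s = s0 then 1 else 0)"
    by (intro sum.cong refl) (simp add: solution_iff)
  also have "\<dots> = (if Fint (int n) = 0 then 1 else 0)"
  proof (cases "Fint (int n) = 0")
    case True
    hence "n = nat a * (q * r) + nat b * (r * p) + nat c * (p * q)"
      using Fint_zero_combination abc by blast
    hence "i0 \<le> s0" "s0 \<le> n" by (simp_all add: i0_def s0_def)
    have "(\<Sum>i\<in>{0..s}. if Fint (int n) = 0 \<and> i = i0 \<and> s = s0 then 1 else 0)
        = (if s = s0 then 1 else (0::complex))" for s
      using True \<open>i0 \<le> s0\<close> by (cases "s = s0") (simp_all add: sum.delta)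
    hence "(\<Sum>s\<in>{0..n}. \<Sum>i\<in>{0..s}. if Fint (int n) = 0 \<and> i = i0 \<and> s = s0 then 1 else 0)
        = (\<Sum>s\<in>{0..n}. if s = s0 then 1 else (0::complex))" by simp
    also have "\<dots> = 1" using \<open>s0 \<le> n\<close> by (simp add: sum.delta)
    finally show ?thesis using True by simp
  qed simp
  finally show ?thesis .
qed

definition ind :: "nat \<Rightarrow> int \<Rightarrow> int" where
  "ind d k = (if Fint k = int d then 1 else 0)"

definition pattern :: "nat \<Rightarrow> int \<Rightarrow> int" where
  "pattern d k = (ind d k + ind d (k - int q - int r)) - (ind d (k - int q) + ind d (k - int r))"

definition window :: "nat \<Rightarrow> int \<Rightarrow> int" where
  "window d n = (\<Sum>k\<in>{n - int p + 1..n}. pattern d k)"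

lemma Ncount_pair: "int (Ncount d [Ffun p q r a, Ffun p q r b]) = ind d a + ind d b"
  by (simp add: Ncount_def Ffun_eq_Fint ind_def)

text \<open>The same with integer indices; negative indices have \<open>F \<noteq> 0\<close> and coefficient 0.\<close>

lemma coeff_int_combination_series:
  assumes "k < int (p * q * r)"
  shows "coeff_int combination_series k = of_int (ind 0 k)"
proof (cases "k < 0")
  case True
  thus ?thesis using Fint_neg by (simp add: coeff_int_def ind_def)
next
  case False
  hence "nat k < p * q * r" using assms by linarith
  thus ?thesis using False coeff_combination_series[of "nat k"] by (simp add: coeff_int_def ind_def)
qed

text \<open>The \<open>N_0\<close> formula: reading off the coefficient of \<open>x^n\<close> in the expansion of \<open>\<Phi>_pqr\<close>;
  the factor \<open>1 - x^pqr\<close> does not contribute below \<open>pqr\<close>.\<close>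

lemma coeff_cyclo_window_zero:
  assumes "n < int (p * q * r)"
  shows "coeff_int (fps_of_poly (cyclo (p * q * r))) n = of_int (window 0 n)"
proof -
  define T where "T = (1 - fps_X ^ q) * ((1 - fps_X ^ r) * combination_series)"
  have S: "coeff_int combination_series k = of_int (ind 0 k)" if "k \<le> n" for k
    using that assms by (intro coeff_int_combination_series) linarith
  have "coeff_int (fps_of_poly (cyclo (p * q * r))) n = coeff_int ((\<Sum>i<p. fps_X ^ i) * T) n"
    unfolding fps_cyclo_expansion coeff_int_one_minus_X_power T_def
    using assms by (simp add: coeff_int_def)
  also have "\<dots> = (\<Sum>k\<in>{n - int p + 1..n}. coeff_int T k)"
    by (rule coeff_int_geometric_sum)
  also have "\<dots> = (\<Sum>k\<in>{n - int p + 1..n}. of_int (pattern 0 k))"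
  proof (rule sum.cong[OF refl])
    fix k assume "k \<in> {n - int p + 1..n}"
    hence "k \<le> n" by simp
    thus "coeff_int T k = of_int (pattern 0 k)"
      unfolding T_def coeff_int_one_minus_X_power pattern_def
      by (simp add: S algebra_simps)
  qed
  finally show ?thesis by (simp add: window_def)
qed

text \<open>The \<open>N_2\<close> window at \<open>n\<close> is the \<open>N_0\<close> window at \<open>phi - n\<close>, by the symmetry of \<open>F\<close>.\<close>

lemma window_two_reflect: "window 2 n = window 0 (int phi - n)"
proof -
  define c where "c = int (p * q * r) - sigma + int q + int r"
  have ind2: "ind 2 k = ind 0 (int (p * q * r) - sigma - k)" for k
    using Fint_reflect[of k] by (auto simp: ind_def)
  have "pattern 2 k = pattern 0 (c - k)" for k
    unfolding pattern_def ind2 c_def by (simp add: algebra_simps)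
  hence "window 2 n = (\<Sum>k\<in>{n - int p + 1..n}. pattern 0 (c - k))"
    by (simp add: window_def)
  also have "\<dots> = (\<Sum>j\<in>{c - n..c - (n - int p + 1)}. pattern 0 j)"
    by (rule sum_reflect_int_interval)
  also have "\<dots> = window 0 (int phi - n)"
    unfolding window_def phi_int c_def by (simp add: algebra_simps)
  finally show ?thesis .
qed

text \<open>The \<open>N_1\<close> formula rests on: \<open>F\<close> takes exactly one of the values 0, 1, 2 at each of the
  four arguments, so the three patterns cancel.\<close>

lemma window_sum_zero:
  assumes "0 \<le> n" "n < int (p * q * r)"
  shows "window 0 n + window 1 n + window 2 n = 0"
proof -
  have one_value: "ind 0 j + ind 1 j + ind 2 j = 1" if "n - int p - int q - int r < j" "j \<le> n" for j
  proof -
    have "Fint j \<in> {0, 1, 2}" using that assms sigma_ge by (intro Fint_range) linarith+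
    thus ?thesis by (auto simp: ind_def)
  qed
  have "pattern 0 k + pattern 1 k + pattern 2 k = 0" if "k \<in> {n - int p + 1..n}" for k
  proof -
    have "n - int p - int q - int r < k - int q - int r" "k \<le> n" using that by simp_all
    hence "ind 0 j + ind 1 j + ind 2 j = 1" if "j \<in> {k, k - int q, k - int r, k - int q - int r}" for j
      using that by (intro one_value) auto
    hence "ind 0 k + ind 1 k + ind 2 k = 1"
      "ind 0 (k - int q) + ind 1 (k - int q) + ind 2 (k - int q) = 1"
      "ind 0 (k - int r) + ind 1 (k - int r) + ind 2 (k - int r) = 1"
      "ind 0 (k - int q - int r) + ind 1 (k - int q - int r) + ind 2 (k - int q - int r) = 1"
      by simp_all
    thus ?thesis unfolding pattern_def by linarith
  qed
  thus ?thesis by (simp add: window_def sum.distrib[symmetric])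
qed

end

text \<open>The theorem: the \<open>N_0\<close> formula is the coefficient computation, the \<open>N_2\<close> formula follows by
  palindromy (\<open>phi - n < pqr\<close>), and the \<open>N_1\<close> window is \<open>-2\<close> times the \<open>N_0\<close> window.\<close>

theorem lemma5:
  fixes p q r :: nat and n :: int
  assumes "prime p" "prime q" "prime r" "p \<noteq> q" "q \<noteq> r" "p \<noteq> r"
    and "p < q" "p < r" and "0 \<le> n" "n < int (p * q * r)"
  defines "F \<equiv> Ffun p q r"
  shows "coeff (cyclo (p * q * r)) (nat n) =
           of_int (\<Sum>k\<in>{n - int p + 1..n}.
             int (Ncount 0 [F k, F (k - int q - int r)]) - int (Ncount 0 [F (k - int q), F (k - int r)]))
       \<and> coeff (cyclo (p * q * r)) (nat n) =
           of_int (\<Sum>k\<in>{n - int p + 1..n}.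
             int (Ncount 2 [F k, F (k - int q - int r)]) - int (Ncount 2 [F (k - int q), F (k - int r)]))
       \<and> coeff (cyclo (p * q * r)) (nat n) =
           complex_of_real ((1 / 2) * real_of_int (\<Sum>k\<in>{n - int p + 1..n}.
             int (Ncount 1 [F (k - int q), F (k - int r)]) - int (Ncount 1 [F k, F (k - int q - int r)])))"
proof -
  interpret three_primes p q r using assms by unfold_locales
  have sums: "(\<Sum>k\<in>{n - int p + 1..n}. int (Ncount d [F k, F (k - int q - int r)])
      - int (Ncount d [F (k - int q), F (k - int r)])) = window d n"
    "(\<Sum>k\<in>{n - int p + 1..n}. int (Ncount d [F (k - int q), F (k - int r)])
      - int (Ncount d [F k, F (k - int q - int r)])) = - window d n" for d
    by (simp_all add: window_def pattern_def F_def Ncount_pair sum_negf[symmetric])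
  define c where "c = coeff_int (fps_of_poly (cyclo (p * q * r))) n"
  have c: "coeff (cyclo (p * q * r)) (nat n) = c" using assms by (simp add: c_def coeff_int_def)
  have c0: "c = of_int (window 0 n)" using coeff_cyclo_window_zero assms by (simp add: c_def)
  have "int phi - n < int (p * q * r)" using phi_int sigma_ge assms by linarith
  hence "c = of_int (window 0 (int phi - n))"
    unfolding c_def coeff_int_palindromic[OF cyclo_reflect, of n] degree_cyclo
    by (rule coeff_cyclo_window_zero)
  hence "c = of_int (window 2 n)" by (simp only: window_two_reflect)
  with c0 have "window 2 n = window 0 n" by simp
  hence "- window 1 n = 2 * window 0 n" using window_sum_zero[OF assms(9,10)] by linarith
  hence "c = complex_of_real ((1 / 2) * real_of_int (- window 1 n))" using c0 by simp
  thus ?thesis using c c0 \<open>c = of_int (window 2 n)\<close> by (simp only: sums)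
qed

end
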